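(* Let $k,n\ge1$, $\mathbf Q_0,\mathbf Q_1,\dots,\mathbf Q_n\in\mathbb S^k$, and let $\mathcal K\subseteq\mathbb R^k$ be a nonempty closed convex cone such that $\mathcal L:=\{\mathbf x\in\mathcal K:\mathbf e_1^\top\mathbf x=1\}$ is nonempty and bounded. Then the optimal value of $$\sup\ \mathbf Q_0\bullet\mathbf X\quad\text{s.t.}\quad\mathbf e_1\mathbf e_1^\top\bullet\mathbf X=1,\ \mathbf X\in\mathcal{CP}(\mathcal K),\ \mathbf Q_i\bullet\mathbf X=0\ \forall i\in[n]$$ equals the optimal value of $$\inf\ \beta\quad\text{s.t.}\quad\beta\mathbf e_1\mathbf e_1^\top+\sum_{i=1}^n\psi_i\mathbf Q_i-\mathbf Q_0\in\mathcal{COP}(\mathcal K),\ \beta\in\mathbb R,\ \boldsymbol\psi\in\mathbb R^n.$$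
   Context: $\mathbb S^k$ is the space of symmetric $k\times k$ matrices, $\mathbf A\bullet\mathbf B=\mathrm{trace}(\mathbf A\mathbf B)$, $\mathbf e_1$ is the first standard basis vector of $\mathbb R^k$, $[n]=\{1,\dots,n\}$. $\mathcal{COP}(\mathcal K)=\{\mathbf M\in\mathbb S^k:\mathbf x^\top\mathbf M\mathbf x\ge0\ \forall\mathbf x\in\mathcal K\}$ (copositive matrices with respect to $\mathcal K$), and $\mathcal{CP}(\mathcal K)$ is its dual cone in $\mathbb S^k$ under $\bullet$ (completely positive matrices with respect to $\mathcal K$). *)

theory Defs
  imports "HOL-Analysis.Analysis"
begin

definition symmetric_matrices :: "(real^'k^'k) set" where
  "symmetric_matrices = {M. transpose M = M}"

definition frob :: "real^'k^'k \<Rightarrow> real^'k^'k \<Rightarrow> real" (infixl "\<bullet>\<^sub>F" 70) where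
  "A \<bullet>\<^sub>F B = trace (A ** B)"

definition outer :: "real^'k \<Rightarrow> real^'k \<Rightarrow> real^'k^'k" where
  "outer v w = (\<chi> i j. v $ i * w $ j)"

definition COP :: "(real^'k) set \<Rightarrow> (real^'k^'k) set" where
  "COP K = {M \<in> symmetric_matrices. \<forall>x\<in>K. x \<bullet> (M *v x) \<ge> 0}"

definition CP :: "(real^'k) set \<Rightarrow> (real^'k^'k) set" where
  "CP K = {X \<in> symmetric_matrices. \<forall>M\<in>COP K. M \<bullet>\<^sub>F X \<ge> 0}"

end

theory Submission
  imports Defs
begin

(* Weak duality is the pairing of a primal feasible X with a dual feasible copositive matrix.
   For the converse, boundedness of the base {x \<in> K. e1 \<bullet> x = 1} makes every x \<in> K a multiple of a
   point of the compact set G = {x \<in> K. |e1 \<bullet> x| = 1}. The convex hull C of the rank-one matrices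
   x x^T (x \<in> G) is a compact convex subset of {X \<in> CP(K). e1 e1^T \<bullet> X = 1}. If r exceeds the primal
   value, the graph of Q0 over C misses (constraint subspace) \<times> [r, \<infinity>), and a separating
   hyperplane yields multipliers \<psi> with Q0 \<bullet> X - \<Sum> \<psi>_i Q_i \<bullet> X \<le> r on C. Read on the generators
   x x^T, this says that r e1 e1^T + \<Sum> \<psi>_i Q_i - Q0 is nonnegative on G, hence copositive on K. *)

lemma span_image_finiteE:
  fixes q :: "'i \<Rightarrow> 'a::real_vector"
  assumes "finite I" and "y \<in> span (q ` I)"
  obtains c where "y = (\<Sum>i\<in>I. c i *\<^sub>R q i)"
proof -
  let ?R = "range (\<lambda>c. \<Sum>i\<in>I. c i *\<^sub>R q i)"
  have "subspace ?R"
    unfolding subspace_def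
  proof (intro conjI ballI allI)
    show "0 \<in> ?R"
      by (rule range_eqI[of _ _ "\<lambda>_. 0"]) simp
  next
    fix x y
    assume "x \<in> ?R" "y \<in> ?R"
    then obtain c d where "x = (\<Sum>i\<in>I. c i *\<^sub>R q i)" "y = (\<Sum>i\<in>I. d i *\<^sub>R q i)"
      by blast
    then show "x + y \<in> ?R"
      by (intro range_eqI[of _ _ "\<lambda>i. c i + d i"]) (simp add: scaleR_add_left sum.distrib)
  next
    fix a x
    assume "x \<in> ?R"
    then obtain c where "x = (\<Sum>i\<in>I. c i *\<^sub>R q i)"
      by blast
    then show "a *\<^sub>R x \<in> ?R"
      by (intro range_eqI[of _ _ "\<lambda>i. a * c i"]) (simp add: scaleR_sum_right)
  qed
  moreover have "q ` I \<subseteq> ?R"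
  proof
    fix x
    assume "x \<in> q ` I"
    then obtain j where "j \<in> I" "x = q j"
      by blast
    then show "x \<in> ?R"
      using assms(1) by (intro range_eqI[of _ _ "\<lambda>i. if i = j then 1 else 0"])
        (simp add: if_distrib[where f = "\<lambda>c. c *\<^sub>R _"] sum.delta' cong: if_cong)
  qed
  ultimately show thesis
    using that assms(2) span_minimal by blast
qed

lemma span_if_orthogonal_to_annihilator:
  fixes q :: "'i \<Rightarrow> 'a::euclidean_space"
  assumes "\<And>Y. \<forall>i\<in>I. q i \<bullet> Y = 0 \<Longrightarrow> G \<bullet> Y = 0"
  shows "G \<in> span (q ` I)"
proof -
  obtain y z where y: "y \<in> span (q ` I)" and z: "\<And>w. w \<in> span (q ` I) \<Longrightarrow> orthogonal z w"
    and G: "G = y + z"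
    using orthogonal_subspace_decomp_exists by blast
  have "\<forall>i\<in>I. q i \<bullet> z = 0"
    using z[OF span_base[OF imageI]] by (simp add: orthogonal_def inner_commute)
  then have "G \<bullet> z = 0"
    by (rule assms)
  moreover have "y \<bullet> z = 0"
    using z[OF y] by (simp add: orthogonal_def inner_commute)
  ultimately have "z \<bullet> z = 0"
    using G by (simp add: inner_add_left)
  then show ?thesis
    using G y by simp
qed

lemma separating_hyperplane_subspace_halfline:
  fixes C W :: "'a::euclidean_space set"
  assumes "compact C" "convex C" "C \<noteq> {}" "subspace W"
    and below: "\<And>X. X \<in> C \<Longrightarrow> X \<in> W \<Longrightarrow> p \<bullet> X < r"
  obtains G g b where "\<And>Y. Y \<in> W \<Longrightarrow> G \<bullet> Y = 0" and "0 \<le> g" and "b < g * r"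
    and "\<And>X. X \<in> C \<Longrightarrow> G \<bullet> X + g * (p \<bullet> X) < b"
proof -
  let ?S = "(\<lambda>X. (X, p \<bullet> X)) ` C" and ?T = "W \<times> {r..}"
  have "linear (\<lambda>X. (X, p \<bullet> X))"
    by (simp add: linear_iff inner_add_right)
  then have "convex ?S"
    using assms(2) by (rule convex_linear_image)
  moreover have "compact ?S"
    using assms(1) by (intro compact_continuous_image continuous_intros)
  moreover have "convex ?T" and "closed ?T"
    using assms(4) by (simp_all add: convex_Times subspace_imp_convex closed_Times closed_subspace)
  moreover have "?S \<noteq> {}"
    using assms(3) by blast
  moreover have "?S \<inter> ?T = {}"
    using below by (auto simp: not_le[symmetric])
  ultimately obtain a b where S: "\<forall>x\<in>?S. a \<bullet> x < b" and T: "\<forall>x\<in>?T. b < a \<bullet> x"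
    using separating_hyperplane_compact_closed[of ?S ?T] by blast
  obtain G g where a: "a = (G, g)"
    by (cases a)
  have sepC: "G \<bullet> X + g * (p \<bullet> X) < b" if "X \<in> C" for X
    using S that by (auto simp: a)
  have sepT: "b < G \<bullet> Y + g * t" if "Y \<in> W" "r \<le> t" for Y t
    using T that by (auto simp: a)
  have "b < g * r"
    using sepT[of 0 r] assms(4) by (simp add: subspace_0)
  moreover have "0 \<le> g"
  proof (rule ccontr)
    assume "\<not> 0 \<le> g"
    \<comment> \<open>otherwise (0, t) lies on the wrong side of the hyperplane for large t\<close>
    define t where "t = r + (\<bar>b\<bar> + \<bar>g * r\<bar>) / - g"
    have "r \<le> t"
      using \<open>\<not> 0 \<le> g\<close> by (simp add: t_def divide_nonneg_neg)
    moreover have "g * t = g * r - (\<bar>b\<bar> + \<bar>g * r\<bar>)"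
      using \<open>\<not> 0 \<le> g\<close> by (simp add: t_def field_simps)
    ultimately show False
      using sepT[of 0 t] assms(4) by (simp add: subspace_0)
  qed
  moreover have "G \<bullet> Y = 0" if "Y \<in> W" for Y
  proof (rule ccontr)
    assume "G \<bullet> Y \<noteq> 0"
    define s where "s = (b - g * r - 1) / (G \<bullet> Y)"
    have "s *\<^sub>R Y \<in> W"
      using assms(4) that by (rule subspace_scale)
    then have "b < s * (G \<bullet> Y) + g * r"
      using sepT[of "s *\<^sub>R Y" r] by simp
    then show False
      using \<open>G \<bullet> Y \<noteq> 0\<close> by (simp add: s_def)
  qed
  ultimately show thesis
    using that sepC by blast
qed

lemma lagrange_multipliers_compact_convex:
  fixes C :: "'a::euclidean_space set" and q :: "'i \<Rightarrow> 'a"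
  assumes "finite I" "compact C" "convex C" "C \<noteq> {}"
    and below: "\<And>X. X \<in> C \<Longrightarrow> \<forall>i\<in>I. q i \<bullet> X = 0 \<Longrightarrow> p \<bullet> X < r"
  shows "\<exists>\<psi>. \<forall>X\<in>C. p \<bullet> X - (\<Sum>i\<in>I. \<psi> i * (q i \<bullet> X)) \<le> r"
proof -
  have "subspace {Y. \<forall>i\<in>I. q i \<bullet> Y = 0}"
    by (auto simp: subspace_def inner_add_right)
  then obtain G g b where G_annihilates: "\<And>Y. \<forall>i\<in>I. q i \<bullet> Y = 0 \<Longrightarrow> G \<bullet> Y = 0"
    and "0 \<le> g" and "b < g * r" and sep: "\<And>X. X \<in> C \<Longrightarrow> G \<bullet> X + g * (p \<bullet> X) < b"
    by (rule separating_hyperplane_subspace_halfline[OF assms(2-4)]) (use below in auto)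
  obtain c where G: "G = (\<Sum>i\<in>I. c i *\<^sub>R q i)"
    using span_image_finiteE[OF assms(1) span_if_orthogonal_to_annihilator] G_annihilates by blast
  obtain t where "0 \<le> t" and t: "\<And>X. X \<in> C \<Longrightarrow> p \<bullet> X + t * (G \<bullet> X) \<le> r"
  proof (cases "g = 0")
    case False
    with \<open>0 \<le> g\<close> have "0 < g"
      by simp
    have "p \<bullet> X + (1 / g) * (G \<bullet> X) \<le> r" if "X \<in> C" for X
      using sep[OF that] \<open>b < g * r\<close> \<open>0 < g\<close> by (simp add: field_simps)
    then show thesis
      using \<open>0 < g\<close> by (intro that[of "1 / g"]) simp_all
  next
    case True
    \<comment> \<open>then G alone separates C from the constraint subspace, and a large multiple of it dominates p\<close>
    have "continuous_on C (\<lambda>X. p \<bullet> X)"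
      by (intro continuous_intros)
    then obtain X0 where "X0 \<in> C" and max: "\<And>X. X \<in> C \<Longrightarrow> p \<bullet> X \<le> p \<bullet> X0"
      using continuous_attains_sup[OF assms(2,4)] by blast
    define t where "t = (\<bar>p \<bullet> X0\<bar> + \<bar>r\<bar>) / - b"
    have "b < 0"
      using \<open>b < g * r\<close> True by simp
    then have "0 \<le> t" and "t * b = - (\<bar>p \<bullet> X0\<bar> + \<bar>r\<bar>)"
      by (simp_all add: t_def divide_nonneg_neg field_simps)
    moreover have "t * (G \<bullet> X) \<le> t * b" if "X \<in> C" for X
      using sep[OF that] True \<open>0 \<le> t\<close> by (simp add: mult_left_mono)
    ultimately show thesis
      using max by (intro that[of t]) fastforce+
  qed
  have lagrangian: "p \<bullet> X - (\<Sum>i\<in>I. (- t * c i) * (q i \<bullet> X)) = p \<bullet> X + t * (G \<bullet> X)" for X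
    by (simp add: G inner_sum_left sum_distrib_left sum_negf mult.assoc)
  have "\<forall>X\<in>C. p \<bullet> X - (\<Sum>i\<in>I. (- t * c i) * (q i \<bullet> X)) \<le> r"
    unfolding lagrangian using t by blast
  then show ?thesis
    by (rule exI[of _ "\<lambda>i. - t * c i"])
qed

lemma ereal_SUP_eq_INF_if_duality:
  assumes weak: "\<And>x y. x \<in> A \<Longrightarrow> y \<in> B \<Longrightarrow> f x \<le> y"
    and strong: "\<And>r. \<forall>x\<in>A. f x < r \<Longrightarrow> r \<in> B"
  shows "(SUP x\<in>A. ereal (f x)) = (INF y\<in>B. ereal y)"
proof (rule antisym)
  show "(SUP x\<in>A. ereal (f x)) \<le> (INF y\<in>B. ereal y)"
    using weak by (intro SUP_least INF_greatest) simp
  show "(INF y\<in>B. ereal y) \<le> (SUP x\<in>A. ereal (f x))"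
  proof (rule ccontr)
    assume "\<not> ?thesis"
    then have "(SUP x\<in>A. ereal (f x)) < (INF y\<in>B. ereal y)"
      by (rule not_le_imp_less)
    then obtain z where z: "(SUP x\<in>A. ereal (f x)) < ereal z" "ereal z < (INF y\<in>B. ereal y)"
      using ereal_dense2 by blast
    have "ereal (f x) < ereal z" if "x \<in> A" for x
      using SUP_upper[OF that] z(1) by (rule order.strict_trans1)
    then have "z \<in> B"
      by (intro strong) simp
    then have "(INF y\<in>B. ereal y) \<le> ereal z"
      by (rule INF_lower)
    with z(2) show False
      by simp
  qed
qed

context
  fixes K :: "'a::euclidean_space set" and e :: 'a
  assumes convex: "convex K" and cone: "cone K"
    and base_nonempty: "{x \<in> K. e \<bullet> x = 1} \<noteq> {}"
    and base_bounded: "bounded {x \<in> K. e \<bullet> x = 1}"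
begin

lemma bounded_base_cone_eq_0:
  assumes "z \<in> K" and "e \<bullet> z = 0"
  shows "z = 0"
proof (rule ccontr)
  assume "z \<noteq> 0"
  obtain y where y: "y \<in> K" "e \<bullet> y = 1"
    using base_nonempty by auto
  obtain B where B: "\<And>w. w \<in> K \<Longrightarrow> e \<bullet> w = 1 \<Longrightarrow> norm w \<le> B"
    using base_bounded by (auto simp: bounded_iff)
  define t where "t = (B + norm y + 1) / norm z"
  have "norm y \<le> B"
    using B y by blast
  then have "B + norm y + 1 > 0"
    using norm_ge_zero[of y] by linarith
  then have t: "t \<ge> 0" "norm (t *\<^sub>R z) = B + norm y + 1"
    using \<open>z \<noteq> 0\<close> by (auto simp: t_def)
  \<comment> \<open>the ray through z, shifted to start at y, stays in the bounded base\<close>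
  have "y + t *\<^sub>R z \<in> K"
    using y(1) t(1) \<open>z \<in> K\<close> convex cone convex_cone[of K] by blast
  moreover have "e \<bullet> (y + t *\<^sub>R z) = 1"
    using y(2) assms(2) by (simp add: inner_add_right)
  ultimately have "norm (y + t *\<^sub>R z) \<le> B"
    by (rule B)
  moreover have "norm (t *\<^sub>R z) \<le> norm (y + t *\<^sub>R z) + norm y"
    using norm_triangle_ineq4[of "y + t *\<^sub>R z" y] by simp
  ultimately show False
    using t(2) by linarith
qed

lemma bounded_base_cone_uminus_mem:
  assumes "x \<in> K" and "e \<bullet> x = -1"
  shows "- x \<in> {y \<in> K. e \<bullet> y = 1}"
proof -
  obtain y where y: "y \<in> K" "e \<bullet> y = 1"
    using base_nonempty by auto
  have "x + y = 0"
    using assms y convex cone convex_cone[of K]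
    by (intro bounded_base_cone_eq_0) (auto simp: inner_add_right)
  then show ?thesis
    using y by (simp add: add_eq_0_iff)
qed

lemma bounded_base_cone_scaleR_decomp:
  assumes "x \<in> K"
  shows "\<exists>c. \<exists>y\<in>{y \<in> K. \<bar>e \<bullet> y\<bar> = 1}. x = c *\<^sub>R y"
proof (cases "e \<bullet> x = 0")
  case True
  obtain y where "y \<in> K" "e \<bullet> y = 1"
    using base_nonempty by auto
  then show ?thesis
    using bounded_base_cone_eq_0[OF assms True] by (intro exI[of _ 0]) auto
next
  case False
  have "(1 / \<bar>e \<bullet> x\<bar>) *\<^sub>R x \<in> K"
    using assms cone by (simp add: cone_def)
  moreover have "\<bar>e \<bullet> ((1 / \<bar>e \<bullet> x\<bar>) *\<^sub>R x)\<bar> = 1"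
    using False by simp
  moreover have "x = \<bar>e \<bullet> x\<bar> *\<^sub>R ((1 / \<bar>e \<bullet> x\<bar>) *\<^sub>R x)"
    using False by simp
  ultimately show ?thesis
    by blast
qed

lemma compact_bounded_base_cone_abs_slice:
  assumes "closed K"
  shows "compact {y \<in> K. \<bar>e \<bullet> y\<bar> = 1}"
proof -
  let ?L = "{x \<in> K. e \<bullet> x = 1}"
  have "{y \<in> K. \<bar>e \<bullet> y\<bar> = 1} \<subseteq> ?L \<union> uminus ` ?L"
  proof
    fix y
    assume y: "y \<in> {y \<in> K. \<bar>e \<bullet> y\<bar> = 1}"
    show "y \<in> ?L \<union> uminus ` ?L"
    proof (cases "e \<bullet> y = 1")
      case False
      then have "- y \<in> ?L"
        using y by (intro bounded_base_cone_uminus_mem) (auto simp: abs_if split: if_splits)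
      then show ?thesis
        by (intro UnI2 image_eqI[where x = "- y"]) simp_all
    qed (use y in simp)
  qed
  moreover have "bounded (?L \<union> uminus ` ?L)"
    using base_bounded by (simp add: bounded_Un)
  ultimately have "bounded {y \<in> K. \<bar>e \<bullet> y\<bar> = 1}"
    by (rule bounded_subset[rotated])
  moreover have "closed {y \<in> K. \<bar>e \<bullet> y\<bar> = 1}"
    using assms by (intro closed_Collect_conj closed_Collect_eq continuous_intros) auto
  ultimately show ?thesis
    by (simp add: compact_eq_bounded_closed)
qed

end

lemma frob_eq_inner_transpose: "A \<bullet>\<^sub>F B = A \<bullet> transpose B"
  by (simp add: frob_def trace_def matrix_matrix_mult_def inner_vec_def transpose_def)

lemma frob_eq_inner: "B \<in> symmetric_matrices \<Longrightarrow> A \<bullet>\<^sub>F B = A \<bullet> B"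
  by (simp add: frob_eq_inner_transpose symmetric_matrices_def)

lemma subspace_symmetric_matrices: "subspace symmetric_matrices"
  by (auto simp: subspace_def symmetric_matrices_def transpose_scalar vec_eq_iff transpose_def)

lemma inner_matrix_vector_mult_eq_inner_outer: "x \<bullet> (M *v x) = M \<bullet> outer x x"
  by (simp add: inner_vec_def matrix_vector_mult_def outer_def sum_distrib_left mult_ac)

lemma outer_in_symmetric_matrices: "outer x x \<in> symmetric_matrices"
  by (simp add: symmetric_matrices_def transpose_def outer_def vec_eq_iff mult.commute)

lemma outer_in_CP: "x \<in> K \<Longrightarrow> outer x x \<in> CP K"
  using outer_in_symmetric_matrices
  by (auto simp: CP_def COP_def frob_eq_inner inner_matrix_vector_mult_eq_inner_outer[symmetric])

lemma inner_outer_outer: "outer e e \<bullet> outer x x = (e \<bullet> x)\<^sup>2"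
proof -
  have "outer e e *v x = (e \<bullet> x) *\<^sub>R e"
    by (simp add: vec_eq_iff matrix_vector_mult_def outer_def inner_vec_def
        sum_distrib_left sum_distrib_right mult_ac)
  then show ?thesis
    by (simp add: inner_matrix_vector_mult_eq_inner_outer[symmetric] power2_eq_square inner_commute)
qed

lemma convex_CP: "convex (CP K)"
proof -
  have "CP K = symmetric_matrices \<inter> (\<Inter>M\<in>COP K. {X. 0 \<le> M \<bullet> X})"
    by (auto simp: CP_def frob_eq_inner)
  then show ?thesis
    by (simp add: convex_Int convex_INT convex_halfspace_ge subspace_imp_convex
        subspace_symmetric_matrices)
qed

lemma COP_if_nonneg_on_generators:
  assumes "M \<in> symmetric_matrices"
    and "\<And>x. x \<in> K \<Longrightarrow> \<exists>c. \<exists>y\<in>G. x = c *\<^sub>R y"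
    and "\<And>y. y \<in> G \<Longrightarrow> 0 \<le> y \<bullet> (M *v y)"
  shows "M \<in> COP K"
proof -
  have "0 \<le> x \<bullet> (M *v x)" if "x \<in> K" for x
  proof -
    obtain c y where "y \<in> G" and x: "x = c *\<^sub>R y"
      using assms(2) \<open>x \<in> K\<close> by blast
    have "x \<bullet> (M *v x) = c\<^sup>2 * (y \<bullet> (M *v y))"
      by (simp add: x matrix_vector_mult_scaleR power2_eq_square)
    then show ?thesis
      using assms(3)[OF \<open>y \<in> G\<close>] by simp
  qed
  then show ?thesis
    using assms(1) by (simp add: COP_def)
qed

lemma weak_duality:
  assumes "X \<in> CP K" and "outer e e \<bullet>\<^sub>F X = 1" and "\<forall>i\<in>I. Q i \<bullet>\<^sub>F X = 0"
    and "\<beta> *\<^sub>R outer e e + (\<Sum>i\<in>I. \<psi> i *\<^sub>R Q i) - Q0 \<in> COP K"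
  shows "Q0 \<bullet>\<^sub>F X \<le> \<beta>"
proof -
  have sym: "X \<in> symmetric_matrices"
    using assms(1) by (simp add: CP_def)
  have "0 \<le> (\<beta> *\<^sub>R outer e e + (\<Sum>i\<in>I. \<psi> i *\<^sub>R Q i) - Q0) \<bullet>\<^sub>F X"
    using assms(1,4) by (simp add: CP_def)
  also have "\<dots> = \<beta> * (outer e e \<bullet>\<^sub>F X) + (\<Sum>i\<in>I. \<psi> i * (Q i \<bullet>\<^sub>F X)) - Q0 \<bullet>\<^sub>F X"
    using sym by (simp add: frob_eq_inner inner_diff_left inner_add_left inner_sum_left)
  also have "\<dots> = \<beta> - Q0 \<bullet>\<^sub>F X"
    using assms(2,3) by simp
  finally show ?thesis
    by simp
qed

lemma convex_hull_outer_subset_CP: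
  assumes "G \<subseteq> K" and "\<And>y. y \<in> G \<Longrightarrow> \<bar>e \<bullet> y\<bar> = 1"
  shows "convex hull ((\<lambda>y. outer y y) ` G) \<subseteq> {X \<in> CP K. outer e e \<bullet> X = 1}"
proof (rule hull_minimal)
  have "(e \<bullet> y)\<^sup>2 = 1" if "y \<in> G" for y
    using assms(2)[OF that] by (metis power2_abs power_one)
  then show "(\<lambda>y. outer y y) ` G \<subseteq> {X \<in> CP K. outer e e \<bullet> X = 1}"
    using assms(1) by (auto intro: outer_in_CP simp: inner_outer_outer)
  show "convex {X \<in> CP K. outer e e \<bullet> X = 1}"
    using convex_Int[OF convex_CP convex_hyperplane] by (simp add: Collect_conj_eq)
qed

lemma dual_feasible_if_primal_below:
  fixes K :: "(real^'k) set" and Q :: "'i \<Rightarrow> real^'k^'k"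
  assumes "closed K" "convex K" "cone K"
    and "{x \<in> K. e \<bullet> x = 1} \<noteq> {}" "bounded {x \<in> K. e \<bullet> x = 1}"
    and "finite I" "\<forall>i\<in>I. Q i \<in> symmetric_matrices" "Q0 \<in> symmetric_matrices"
    and below: "\<And>X. X \<in> CP K \<Longrightarrow> outer e e \<bullet> X = 1 \<Longrightarrow> \<forall>i\<in>I. Q i \<bullet> X = 0 \<Longrightarrow> Q0 \<bullet> X < r"
  shows "\<exists>\<psi>. r *\<^sub>R outer e e + (\<Sum>i\<in>I. \<psi> i *\<^sub>R Q i) - Q0 \<in> COP K"
proof -
  let ?G = "{y \<in> K. \<bar>e \<bullet> y\<bar> = 1}"
  let ?C = "convex hull ((\<lambda>y. outer y y) ` ?G)"
  have C_sub: "?C \<subseteq> {X \<in> CP K. outer e e \<bullet> X = 1}"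
    by (rule convex_hull_outer_subset_CP) auto
  have "compact ?G"
    using compact_bounded_base_cone_abs_slice[OF assms(2-5,1)] .
  then have "compact ?C"
    by (intro compact_convex_hull compact_continuous_image) (auto simp: outer_def intro!: continuous_intros)
  moreover have "?C \<noteq> {}"
    using assms(4) by auto
  moreover have "Q0 \<bullet> X < r" if "X \<in> ?C" "\<forall>i\<in>I. Q i \<bullet> X = 0" for X
    using that C_sub below by blast
  ultimately obtain \<psi> where \<psi>: "\<forall>X\<in>?C. Q0 \<bullet> X - (\<Sum>i\<in>I. \<psi> i * (Q i \<bullet> X)) \<le> r"
    using lagrange_multipliers_compact_convex[OF assms(6) _ convex_convex_hull] by blast
  have "r *\<^sub>R outer e e + (\<Sum>i\<in>I. \<psi> i *\<^sub>R Q i) - Q0 \<in> COP K"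
  proof (rule COP_if_nonneg_on_generators)
    show "r *\<^sub>R outer e e + (\<Sum>i\<in>I. \<psi> i *\<^sub>R Q i) - Q0 \<in> symmetric_matrices"
      using subspace_symmetric_matrices assms(7,8)
      by (intro subspace_diff subspace_add subspace_scale subspace_sum outer_in_symmetric_matrices) auto
    show "\<exists>c. \<exists>y\<in>?G. x = c *\<^sub>R y" if "x \<in> K" for x
      using bounded_base_cone_scaleR_decomp[OF assms(2-5) that] .
  next
    fix y
    assume "y \<in> ?G"
    then have "outer y y \<in> ?C"
      by (intro hull_inc imageI)
    then have "Q0 \<bullet> outer y y - (\<Sum>i\<in>I. \<psi> i * (Q i \<bullet> outer y y)) \<le> r"
      and "outer e e \<bullet> outer y y = 1"
      using \<psi> C_sub by blast+
    then show "0 \<le> y \<bullet> ((r *\<^sub>R outer e e + (\<Sum>i\<in>I. \<psi> i *\<^sub>R Q i) - Q0) *v y)"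
      by (simp add: inner_matrix_vector_mult_eq_inner_outer inner_diff_left inner_add_left inner_sum_left)
  qed
  then show ?thesis
    by blast
qed

theorem lemma8:
  fixes K :: "(real^'k) set"
    and i1 :: 'k
    and Q :: "nat \<Rightarrow> real^'k^'k"
    and n :: nat
  defines "e1 \<equiv> axis i1 (1::real)"
  assumes "n \<ge> 1"
    and "\<forall>i\<in>{0..n}. Q i \<in> symmetric_matrices"
    and "K \<noteq> {}" and "closed K" and "convex K" and "cone K"
    and "{x \<in> K. e1 \<bullet> x = 1} \<noteq> {}"
    and "bounded {x \<in> K. e1 \<bullet> x = 1}"
  shows "(SUP X \<in> {X. outer e1 e1 \<bullet>\<^sub>F X = 1 \<and> X \<in> CP K \<and> (\<forall>i\<in>{1..n}. Q i \<bullet>\<^sub>F X = 0)}.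
            ereal (Q 0 \<bullet>\<^sub>F X))
       = (INF \<beta> \<in> {\<beta>::real. \<exists>\<psi>::nat \<Rightarrow> real.
            \<beta> *\<^sub>R outer e1 e1 + (\<Sum>i=1..n. \<psi> i *\<^sub>R Q i) - Q 0 \<in> COP K}.
            ereal \<beta>)"
proof (rule ereal_SUP_eq_INF_if_duality)
  fix X \<beta>
  assume X: "X \<in> {X. outer e1 e1 \<bullet>\<^sub>F X = 1 \<and> X \<in> CP K \<and> (\<forall>i\<in>{1..n}. Q i \<bullet>\<^sub>F X = 0)}"
    and "\<beta> \<in> {\<beta>. \<exists>\<psi>. \<beta> *\<^sub>R outer e1 e1 + (\<Sum>i=1..n. \<psi> i *\<^sub>R Q i) - Q 0 \<in> COP K}"
  then obtain \<psi> where "\<beta> *\<^sub>R outer e1 e1 + (\<Sum>i=1..n. \<psi> i *\<^sub>R Q i) - Q 0 \<in> COP K"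
    by blast
  with X show "Q 0 \<bullet>\<^sub>F X \<le> \<beta>"
    by (intro weak_duality[where I = "{1..n}"]) auto
next
  fix r
  assume primal_below: "\<forall>X\<in>{X. outer e1 e1 \<bullet>\<^sub>F X = 1 \<and> X \<in> CP K \<and> (\<forall>i\<in>{1..n}. Q i \<bullet>\<^sub>F X = 0)}.
    Q 0 \<bullet>\<^sub>F X < r"
  have "Q 0 \<bullet> X < r" if "X \<in> CP K" "outer e1 e1 \<bullet> X = 1" "\<forall>i\<in>{1..n}. Q i \<bullet> X = 0" for X
  proof -
    have "X \<in> symmetric_matrices"
      using that(1) by (simp add: CP_def)
    then show ?thesis
      using bspec[OF primal_below, of X] that by (simp add: frob_eq_inner)
  qed
  then have "\<exists>\<psi>. r *\<^sub>R outer e1 e1 + (\<Sum>i=1..n. \<psi> i *\<^sub>R Q i) - Q 0 \<in> COP K"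
    using assms(3) by (intro dual_feasible_if_primal_below[OF assms(5-9) finite_atLeastAtMost]) auto
  then show "r \<in> {\<beta>. \<exists>\<psi>. \<beta> *\<^sub>R outer e1 e1 + (\<Sum>i=1..n. \<psi> i *\<^sub>R Q i) - Q 0 \<in> COP K}"
    by blast
qed

end
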